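(* For the Data Collection process on a fixed connected weighted graph with fixed sink, sources and relative rate vector $\bm{J}$, started from the all-empty state, for every $t\ge0$ and every node $u\in V\setminus\{u_s\}$, the probability $\Pr[Q^\beta_t(u)>0]$ is a non-decreasing function of $\beta$ (over $\beta>0$ with $\beta\bm{J}_v\le1$ for all $v$).
   Context: Data Collection process: on a connected undirected graph $G=(V,E,w)$ with positive weights and $d_u=\sum_{v:(u,v)\in E}w_{uv}$, fix a sink $u_s\in V$ and a set of sources $V_s\subseteq V\setminus\{u_s\}$, with relative rate vector $\bm{J}$ ($\bm{J}_v>0$ for $v\in V_s$, $0$ for other $v\ne u_s$, $\bm{J}_{u_s}=-\sum_{v\ne u_s}\bm{J}_v$) and $\beta>0$ with $\beta\bm{J}_v\le1$. The process with parameter $\beta$ is the discrete-time Markov chain $\{Q^\beta_t\}$ on $(\mathbb{N}\cup\{0\})^{V\setminus\{u_s\}}$ ($Q^\beta_t(v)$ = queue size at $v$) where at each step each $v\in V_s$ independently generates a new packet with probability $\beta\bm{J}_v$ into its queue, and each $u\ne u_s$ with nonempty queue picks one packet and a neighbor $v$ with probability $w_{uv}/d_u$ and transmits the packet to $v$ (added to $v$'s queue if $v\ne u_s$, removed from the system if $v=u_s$). *)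

theory Defs
  imports "HOL-Probability.Probability"
begin

text \<open>Weighted undirected graph on the finite vertex set V, given by a symmetric
nonnegative weight function w (w u v > 0 iff {u,v} is an edge; w vanishes outside V).\<close>

definition wgraph :: "'a set \<Rightarrow> ('a \<Rightarrow> 'a \<Rightarrow> real) \<Rightarrow> bool" where
  "wgraph V w \<longleftrightarrow> finite V \<and>
     (\<forall>u v. w u v = w v u) \<and> (\<forall>u v. 0 \<le> w u v) \<and>
     (\<forall>u v. w u v \<noteq> 0 \<longrightarrow> u \<in> V \<and> v \<in> V)"

definition connected_wgraph :: "'a set \<Rightarrow> ('a \<Rightarrow> 'a \<Rightarrow> real) \<Rightarrow> bool" where
  "connected_wgraph V w \<longleftrightarrow> wgraph V w \<and> V \<noteq> {} \<and>
     (\<forall>u\<in>V. \<forall>v\<in>V. (u, v) \<in> {(x, y). 0 < w x y}\<^sup>*)"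

definition wdeg :: "'a set \<Rightarrow> ('a \<Rightarrow> 'a \<Rightarrow> real) \<Rightarrow> 'a \<Rightarrow> real" where
  "wdeg V w u = (\<Sum>v\<in>V. w u v)"

definition nbr_pmf :: "'a set \<Rightarrow> ('a \<Rightarrow> 'a \<Rightarrow> real) \<Rightarrow> 'a \<Rightarrow> 'a pmf" where
  "nbr_pmf V w u = embed_pmf (\<lambda>v. if v \<in> V then w u v / wdeg V w u else 0)"

text \<open>States are queue vectors q :: 'a \<Rightarrow> nat
(only entries on V - {us} are meaningful; all others are kept 0).
First every source v generates a packet with probability beta * J v; then every
non-sink node with nonempty queue sends one packet to a random neighbour; packets
arriving at the sink are removed.\<close>
definition dc_step :: "'a set \<Rightarrow> ('a \<Rightarrow> 'a \<Rightarrow> real) \<Rightarrow> 'a \<Rightarrow> 'a set \<Rightarrow> ('a \<Rightarrow> real)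
     \<Rightarrow> real \<Rightarrow> ('a \<Rightarrow> nat) \<Rightarrow> ('a \<Rightarrow> nat) pmf" where
  "dc_step V w us Vs J \<beta> q =
     do { g \<leftarrow> Pi_pmf Vs False (\<lambda>v. bernoulli_pmf (\<beta> * J v));
          let q1 = (\<lambda>x. q x + (if g x then 1 else 0));
          let S = {u \<in> V - {us}. 0 < q1 u};
          c \<leftarrow> Pi_pmf S us (\<lambda>u. nbr_pmf V w u);
          return_pmf (\<lambda>x. if x \<in> V - {us}
                           then q1 x - (if 0 < q1 x then 1 else 0) + card {u \<in> S. c u = x}
                           else 0) }"

fun dc_dist :: "'a set \<Rightarrow> ('a \<Rightarrow> 'a \<Rightarrow> real) \<Rightarrow> 'a \<Rightarrow> 'a set \<Rightarrow> ('a \<Rightarrow> real)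
     \<Rightarrow> real \<Rightarrow> nat \<Rightarrow> ('a \<Rightarrow> nat) pmf" where
  "dc_dist V w us Vs J \<beta> 0 = return_pmf (\<lambda>_. 0)"
| "dc_dist V w us Vs J \<beta> (Suc t) = dc_dist V w us Vs J \<beta> t \<bind> dc_step V w us Vs J \<beta>"

definition dc_data :: "'a set \<Rightarrow> ('a \<Rightarrow> 'a \<Rightarrow> real) \<Rightarrow> 'a \<Rightarrow> 'a set \<Rightarrow> ('a \<Rightarrow> real) \<Rightarrow> bool" where
  "dc_data V w us Vs J \<longleftrightarrow> connected_wgraph V w \<and> us \<in> V \<and> Vs \<subseteq> V - {us} \<and>
     (\<forall>v\<in>Vs. 0 < J v) \<and> (\<forall>v\<in>V - {us} - Vs. J v = 0) \<and>
     J us = - (\<Sum>v\<in>V - {us}. J v)"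

definition admissible_beta :: "'a set \<Rightarrow> ('a \<Rightarrow> real) \<Rightarrow> real \<Rightarrow> bool" where
  "admissible_beta V J \<beta> \<longleftrightarrow> 0 < \<beta> \<and> (\<forall>v\<in>V. \<beta> * J v \<le> 1)"

end

theory Submission
  imports Defs
begin

text \<open>Couple the processes for \<open>\<beta>\<^sub>1 \<le> \<beta>\<^sub>2\<close> step by step so that the queue vectors stay
pointwise ordered. Arrivals are coupled source by source (a Bernoulli variable is
stochastically increasing in its parameter). For routing, the set of busy nodes of the
smaller system is contained in that of the larger one, and both systems let their common
busy nodes send to the same neighbours; a busy node of the larger system only adds packets.
Then the event \<open>Q\<^sub>t(u) > 0\<close>, being upward closed, is at least as likely for \<open>\<beta>\<^sub>2\<close>.\<close>

lemma rel_Pi_pmf: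
  assumes fin: "finite A" and "R d d" and "\<And>x. x \<in> A \<Longrightarrow> rel_pmf R (p x) (q x)"
  shows "rel_pmf (\<lambda>f g. \<forall>x. R (f x) (g x)) (Pi_pmf A d p) (Pi_pmf A d q)"
proof -
  have "\<forall>x\<in>A. \<exists>c. (\<forall>a b. (a, b) \<in> set_pmf c \<longrightarrow> R a b) \<and> map_pmf fst c = p x \<and> map_pmf snd c = q x"
    using assms(3) by (metis rel_pmf.simps)
  then obtain c where c: "\<And>x. x \<in> A \<Longrightarrow> (\<forall>a b. (a, b) \<in> set_pmf (c x) \<longrightarrow> R a b)
      \<and> map_pmf fst (c x) = p x \<and> map_pmf snd (c x) = q x"
    by metis
  have "Pi_pmf A d p = Pi_pmf A d (\<lambda>x. map_pmf fst (c x))"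
    and "Pi_pmf A d q = Pi_pmf A d (\<lambda>x. map_pmf snd (c x))"
    by (intro Pi_pmf_cong; simp add: c)+
  then have p: "Pi_pmf A d p = map_pmf (\<lambda>h. fst \<circ> h) (Pi_pmf A (d, d) c)"
    and q: "Pi_pmf A d q = map_pmf (\<lambda>h. snd \<circ> h) (Pi_pmf A (d, d) c)"
    by (simp_all only: Pi_pmf_map[OF fin] fst_conv snd_conv)
  have "R (fst (h x)) (snd (h x))" if h: "h \<in> set_pmf (Pi_pmf A (d, d) c)" for h x
  proof (cases "x \<in> A")
    case True
    then have "h x \<in> set_pmf (c x)"
      using h by (auto simp: set_Pi_pmf[OF fin] PiE_dflt_def)
    then show ?thesis
      using c[OF True] by (cases "h x") auto
  next
    case False
    then have "h x = (d, d)"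
      using h by (auto simp: set_Pi_pmf[OF fin] PiE_dflt_def)
    then show ?thesis
      using \<open>R d d\<close> by simp
  qed
  then show ?thesis
    unfolding p q pmf.rel_map by (intro rel_pmf_reflI) auto
qed

lemma bernoulli_pmf_thinning:
  assumes "0 \<le> p" "p \<le> q" "q \<le> 1"
  shows "bernoulli_pmf p = bernoulli_pmf q \<bind> (\<lambda>b. if b then bernoulli_pmf (p / q) else return_pmf False)"
proof (rule pmf_eqI)
  fix x :: bool
  have ratio: "0 \<le> p / q" "p / q \<le> 1" "q * (p / q) = p"
    using assms by (auto simp: divide_le_eq_1)
  show "pmf (bernoulli_pmf p) x
      = pmf (bernoulli_pmf q \<bind> (\<lambda>b. if b then bernoulli_pmf (p / q) else return_pmf False)) x"
    using assms ratio
    by (cases x) (auto simp: algebra_simps pmf_bind integral_measure_pmf[where A=UNIV] UNIV_bool)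
qed

lemma rel_pmf_bernoulli_pmf_le:
  assumes "0 \<le> p" "p \<le> q" "q \<le> 1"
  shows "rel_pmf (\<le>) (bernoulli_pmf p) (bernoulli_pmf q)"
proof -
  have "rel_pmf (\<le>) (bernoulli_pmf q \<bind> (\<lambda>b. if b then bernoulli_pmf (p / q) else return_pmf False))
      (bernoulli_pmf q \<bind> return_pmf)"
    by (rule rel_pmf_bindI[where R="(=)"]) (auto simp: rel_pmf_return_pmf2 pmf.rel_eq)
  then show ?thesis
    by (simp add: bernoulli_pmf_thinning[OF assms] bind_return_pmf')
qed

lemma rel_pmf_le_measure_mono:
  fixes p q :: "'a::order pmf"
  assumes "rel_pmf (\<le>) p q" and up: "\<And>x y. x \<in> A \<Longrightarrow> x \<le> y \<Longrightarrow> y \<in> A"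
  shows "measure_pmf.prob p A \<le> measure_pmf.prob q A"
proof -
  have "measure_pmf.prob p A \<le> measure_pmf.prob q {y. \<exists>x\<in>A. x \<le> y}"
    by (rule rel_pmf_measureD[OF assms(1)])
  also have "\<dots> \<le> measure_pmf.prob q A"
    using up by (intro measure_pmf.finite_measure_mono) auto
  finally show ?thesis .
qed

definition dc_route :: "'a set \<Rightarrow> ('a \<Rightarrow> 'a \<Rightarrow> real) \<Rightarrow> 'a \<Rightarrow> ('a \<Rightarrow> nat) \<Rightarrow> ('a \<Rightarrow> nat) pmf" where
  "dc_route V w us q =
     do { let S = {u \<in> V - {us}. 0 < q u};
          c \<leftarrow> Pi_pmf S us (nbr_pmf V w);
          return_pmf (\<lambda>x. if x \<in> V - {us}
                           then q x - (if 0 < q x then 1 else 0) + card {u \<in> S. c u = x}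
                           else 0) }"

lemma dc_step_eq_route:
  "dc_step V w us Vs J \<beta> q =
     Pi_pmf Vs False (\<lambda>v. bernoulli_pmf (\<beta> * J v)) \<bind>
       (\<lambda>g. dc_route V w us (\<lambda>x. q x + (if g x then 1 else 0)))"
  unfolding dc_step_def dc_route_def Let_def ..

lemma dc_route_mono:
  assumes "finite V" and "q \<le> q'"
  shows "rel_pmf (\<le>) (dc_route V w us q) (dc_route V w us q')"
proof -
  define S where "S = {u \<in> V - {us}. 0 < q u}"
  define S' where "S' = {u \<in> V - {us}. 0 < q' u}"
  define out where "out r T c = (\<lambda>x. if x \<in> V - {us}
      then r x - (if 0 < r x then 1 else 0) + card {u \<in> T. c u = x} else 0)"
    for r :: "'a \<Rightarrow> nat" and T :: "'a set" and c :: "'a \<Rightarrow> 'a"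
  have "S \<subseteq> S'" and "finite S'"
    using \<open>q \<le> q'\<close> \<open>finite V\<close> by (auto simp: S_def S'_def le_fun_def intro: less_le_trans)
  then have restrict: "Pi_pmf S us (nbr_pmf V w)
      = map_pmf (\<lambda>c x. if x \<in> S then c x else us) (Pi_pmf S' us (nbr_pmf V w))"
    by (intro Pi_pmf_subset)
  have sent: "q x - (if 0 < q x then 1 else 0) \<le> q' x - (if 0 < q' x then 1 else 0)" for x
    using \<open>q \<le> q'\<close> by (auto simp: le_fun_def dest: spec[of _ x])
  have received: "card {u \<in> S. (if u \<in> S then c u else us) = x} \<le> card {u \<in> S'. c u = x}" for c x
    using \<open>S \<subseteq> S'\<close> \<open>finite S'\<close> by (intro card_mono) auto
  have "out q S (\<lambda>x. if x \<in> S then c x else us) \<le> out q' S' c" for c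
  proof (rule le_funI)
    fix x
    show "out q S (\<lambda>x. if x \<in> S then c x else us) x \<le> out q' S' c x"
      unfolding out_def using add_mono[OF sent received] by simp
  qed
  moreover have route: "dc_route V w us r
      = map_pmf (out r {u \<in> V - {us}. 0 < r u}) (Pi_pmf {u \<in> V - {us}. 0 < r u} us (nbr_pmf V w))" for r
    by (simp add: dc_route_def out_def map_pmf_def Let_def)
  ultimately show ?thesis
    unfolding route S_def [symmetric] S'_def [symmetric] restrict map_pmf_comp pmf.rel_map
    by (intro rel_pmf_reflI) simp
qed

lemma dc_step_mono:
  assumes "finite V" and "finite Vs"
    and rates: "\<And>v. v \<in> Vs \<Longrightarrow> 0 \<le> \<beta>1 * J v \<and> \<beta>1 * J v \<le> \<beta>2 * J v \<and> \<beta>2 * J v \<le> 1"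
    and "q \<le> q'"
  shows "rel_pmf (\<le>) (dc_step V w us Vs J \<beta>1 q) (dc_step V w us Vs J \<beta>2 q')"
  unfolding dc_step_eq_route
proof (rule rel_pmf_bindI)
  show "rel_pmf (\<lambda>g g'. \<forall>x. g x \<le> g' x) (Pi_pmf Vs False (\<lambda>v. bernoulli_pmf (\<beta>1 * J v)))
      (Pi_pmf Vs False (\<lambda>v. bernoulli_pmf (\<beta>2 * J v)))"
    using rates by (intro rel_Pi_pmf \<open>finite Vs\<close> rel_pmf_bernoulli_pmf_le) auto
next
  fix g g' :: "'a \<Rightarrow> bool"
  assume "\<forall>x. g x \<le> g' x"
  then have "q x + (if g x then 1 else 0) \<le> q' x + (if g' x then 1 else 0)" for x
    using le_funD[OF \<open>q \<le> q'\<close>, of x] by (cases "g x"; cases "g' x") auto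
  then show "rel_pmf (\<le>) (dc_route V w us (\<lambda>x. q x + (if g x then 1 else 0)))
      (dc_route V w us (\<lambda>x. q' x + (if g' x then 1 else 0)))"
    by (intro dc_route_mono[OF \<open>finite V\<close>] le_funI)
qed

lemma dc_dist_mono:
  assumes "finite V" and "finite Vs"
    and "\<And>v. v \<in> Vs \<Longrightarrow> 0 \<le> \<beta>1 * J v \<and> \<beta>1 * J v \<le> \<beta>2 * J v \<and> \<beta>2 * J v \<le> 1"
  shows "rel_pmf (\<le>) (dc_dist V w us Vs J \<beta>1 t) (dc_dist V w us Vs J \<beta>2 t)"
proof (induction t)
  case 0
  show ?case by (simp add: rel_pmf_return_pmf1)
next
  case (Suc t)
  then show ?case
    unfolding dc_dist.simps by (rule rel_pmf_bindI) (rule dc_step_mono[OF assms])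
qed

theorem claim3:
  fixes V :: "'a set" and w :: "'a \<Rightarrow> 'a \<Rightarrow> real" and us :: 'a and Vs :: "'a set"
    and J :: "'a \<Rightarrow> real" and t :: nat and u :: 'a and \<beta>1 \<beta>2 :: real
  assumes "dc_data V w us Vs J"
    and "u \<in> V - {us}"
    and "admissible_beta V J \<beta>1" and "admissible_beta V J \<beta>2"
    and "\<beta>1 \<le> \<beta>2"
  shows "measure_pmf.prob (dc_dist V w us Vs J \<beta>1 t) {q. 0 < q u}
       \<le> measure_pmf.prob (dc_dist V w us Vs J \<beta>2 t) {q. 0 < q u}"
proof -
  have "finite V" and "Vs \<subseteq> V" and J_pos: "\<And>v. v \<in> Vs \<Longrightarrow> 0 < J v"
    using assms(1) by (auto simp: dc_data_def connected_wgraph_def wgraph_def)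
  have "finite Vs"
    using \<open>Vs \<subseteq> V\<close> \<open>finite V\<close> by (rule finite_subset)
  have "0 \<le> \<beta>1 * J v \<and> \<beta>1 * J v \<le> \<beta>2 * J v \<and> \<beta>2 * J v \<le> 1" if "v \<in> Vs" for v
    using J_pos[OF that] \<open>Vs \<subseteq> V\<close> that assms(3-5)
    by (auto simp: admissible_beta_def intro: mult_right_mono)
  then have "rel_pmf (\<le>) (dc_dist V w us Vs J \<beta>1 t) (dc_dist V w us Vs J \<beta>2 t)"
    by (rule dc_dist_mono[OF \<open>finite V\<close> \<open>finite Vs\<close>])
  then show ?thesis
    by (rule rel_pmf_le_measure_mono) (auto simp: le_fun_def intro: less_le_trans)
qed

end
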